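(* Let $a:\mathbb{R}\to\mathbb{R}$ be such that (C1) $a$ is continuous, and (C2) for every $T\in\mathbb{R}^+$ there exists $\varepsilon_T>0$ with $a(s)\ge\varepsilon_T$ for all $s\le T$. Define $Y_N(t)=\int_{-\infty}^{Nt}\exp\!\big(-\int_u^{Nt}a(\tfrac{s}{N})\,ds\big)\,L(du)$, $t\in\mathbb{R}$, $N\in\mathbb{N}$. Then $\{Y_N(t)\}_{N\in\mathbb{N}}$ is locally stationary with kernels $g_N^0(Nt,v)=\mathbb{1}_{\{v\ge0\}}\exp\!\big(-\int_{-v}^0 a(\tfrac{s}{N}+t)ds\big)$, limiting kernel $g(t,u)=\mathbb{1}_{\{u\ge0\}}e^{-a(t)u}$ and limiting transfer function $A(t,\mu)=\int_{\mathbb{R}}e^{-i\mu u}\mathbb{1}_{\{u\ge0\}}e^{-a(t)u}\,du$.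
   Context: $L$ is a two-sided real Lévy process ($L(t)=L_1(t)\mathbb{1}_{\{t\ge0\}}-L_2(-t)\mathbb{1}_{\{t<0\}}$, $L_1,L_2$ independent copies of a Lévy process) with $E[L(1)]=0$ and $E[L(1)^2]<\infty$; integrals are $L^2$-integrals. A sequence $\{Y_N(t),t\in\mathbb{R}\}_{N\in\mathbb{N}}$ is locally stationary if $Y_N(t)=\int_{\mathbb{R}}g_N^0(Nt,Nt-u)L(du)$ for all $t,N$, where $g_N^0:\mathbb{R}^2\to\mathbb{R}$, $g_N^0(Nt,\cdot)\in L^2(\mathbb{R})$, and there is $g:\mathbb{R}^2\to\mathbb{R}$ such that $t\mapsto g(t,\cdot)$ is continuous into $L^2(\mathbb{R})$ and $g_N^0(Nt,\cdot)\to g(t,\cdot)$ in $L^2(\mathbb{R})$ for every $t$; equivalently in the frequency domain with transfer functions given by the Fourier transforms $A_N^0(Nt,\mu)=\int e^{-i\mu u}g_N^0(Nt,u)du$, $A(t,\mu)=\int e^{-i\mu u}g(t,u)du$. *)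

theory Defs
  imports "HOL-Analysis.Analysis"
begin

definition sq_int :: "(real \<Rightarrow> real) \<Rightarrow> bool" where
  "sq_int f \<longleftrightarrow> f \<in> borel_measurable lborel \<and> integrable lborel (\<lambda>u. (f u)\<^sup>2)"

definition L2_dist_sq :: "(real \<Rightarrow> real) \<Rightarrow> (real \<Rightarrow> real) \<Rightarrow> real" where
  "L2_dist_sq f h = (\<integral>u. (f u - h u)\<^sup>2 \<partial>lborel)"

definition transfer :: "(real \<Rightarrow> real) \<Rightarrow> real \<Rightarrow> complex" where
  "transfer f \<mu> = (\<integral>u. exp (- \<i> * complex_of_real \<mu> * complex_of_real u) * complex_of_real (f u) \<partial>lborel)"

text \<open>A process Y_N(t) = int Y N t u L(du) is represented by its (deterministic) integrand
  Y N t :: real => real (index N ranges over N >= 1).\<close>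
definition locally_stationary ::
  "(nat \<Rightarrow> real \<Rightarrow> real \<Rightarrow> real) \<Rightarrow> (nat \<Rightarrow> real \<Rightarrow> real \<Rightarrow> real)
   \<Rightarrow> (real \<Rightarrow> real \<Rightarrow> real) \<Rightarrow> (real \<Rightarrow> real \<Rightarrow> complex) \<Rightarrow> bool" where
  "locally_stationary Y g0 g A \<longleftrightarrow>
     (\<forall>N t u. N \<ge> 1 \<longrightarrow> Y N t u = g0 N (real N * t) (real N * t - u)) \<and>
     (\<forall>N t. N \<ge> 1 \<longrightarrow> sq_int (g0 N (real N * t))) \<and>
     (\<forall>t. sq_int (g t)) \<and>
     (\<forall>t. ((\<lambda>s. L2_dist_sq (g s) (g t)) \<longlongrightarrow> 0) (at t)) \<and>
     (\<forall>t. (\<lambda>N. L2_dist_sq (g0 N (real N * t)) (g t)) \<longlonglongrightarrow> 0) \<and>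
     (\<forall>t \<mu>. A t \<mu> = transfer (g t) \<mu>)"

end

theory Submission
  imports Defs
begin

text \<open>
  Substituting s \<mapsto> s + N t turns the integrand of Y_N(t) into the kernel
  v \<mapsto> 1{v \<ge> 0} exp (- int_{-v}^0 a(s/N + t) ds). By (C2) the rate is at least some
  \<epsilon> > 0 on (-\<infinity>, t], so all these kernels are dominated by 1{v \<ge> 0} exp (- \<epsilon> v);
  since a(s/N + t) \<rightarrow> a(t) for every s, dominated convergence gives the L^2-convergence to g(t, .).
  Continuity of t \<mapsto> g(t, .) in L^2 follows from the closed form
  |g(s, .) - g(t, .)|^2 = 1/(2 a(s)) - 2/(a(s) + a(t)) + 1/(2 a(t)).
\<close>

definition exp_kernel :: "real \<Rightarrow> real \<Rightarrow> real" where
  "exp_kernel c u = (if u \<ge> 0 then exp (- c * u) else 0)"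

lemma borel_measurable_exp_kernel [measurable]: "exp_kernel c \<in> borel_measurable borel"
  unfolding exp_kernel_def by measurable

lemma exp_kernel_nonneg: "exp_kernel c u \<ge> 0"
  by (simp add: exp_kernel_def)

lemma exp_kernel_mult: "exp_kernel c u * exp_kernel d u = exp_kernel (c + d) u"
  by (simp add: exp_kernel_def algebra_simps flip: exp_add)

lemma exp_kernel_power2: "(exp_kernel c u)\<^sup>2 = exp_kernel (2 * c) u"
  by (simp add: exp_kernel_def power2_eq_square flip: exp_add)

lemma abs_exp_kernel_le: "c \<le> d \<Longrightarrow> \<bar>exp_kernel d u\<bar> \<le> exp_kernel c u"
  by (auto simp: exp_kernel_def intro!: mult_right_mono)

lemma has_bochner_integral_exp_kernel:
  assumes "c > 0"
  shows "has_bochner_integral lborel (exp_kernel c) (1 / c)"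
proof -
  have "((\<lambda>u. exp (- c * u)) has_integral 1 / c) {0..}"
    using has_integral_exp_minus_to_infinity[OF assms, of 0] by simp
  then have "((\<lambda>u. if u \<in> {0..} then exp (- c * u) else 0) has_integral 1 / c) UNIV"
    by (simp only: has_integral_restrict_UNIV)
  moreover have "(\<lambda>u. if u \<in> {0..} then exp (- c * u) else 0) = exp_kernel c"
    by (auto simp: exp_kernel_def)
  ultimately have "(exp_kernel c has_integral 1 / c) UNIV"
    by simp
  then have "integral\<^sup>N lborel (exp_kernel c) = 1 / c"
    by (rule nn_integral_has_integral_lborel[OF borel_measurable_exp_kernel exp_kernel_nonneg])
  then show ?thesis
    using assms by (intro has_bochner_integral_nn_integral) (auto simp: exp_kernel_nonneg)
qed

lemma integrable_exp_kernel: "c > 0 \<Longrightarrow> integrable lborel (exp_kernel c)"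
  by (rule integrable.intros[OF has_bochner_integral_exp_kernel])

lemma integral_exp_kernel: "c > 0 \<Longrightarrow> (\<integral>u. exp_kernel c u \<partial>lborel) = 1 / c"
  by (rule has_bochner_integral_integral_eq[OF has_bochner_integral_exp_kernel])

lemma L2_dist_sq_exp_kernel:
  assumes "c > 0" "d > 0"
  shows "L2_dist_sq (exp_kernel d) (exp_kernel c) = 1 / (2 * d) - 2 / (c + d) + 1 / (2 * c)"
proof -
  have "(exp_kernel d u - exp_kernel c u)\<^sup>2
      = exp_kernel (2 * d) u - 2 * exp_kernel (c + d) u + exp_kernel (2 * c) u" for u
    by (simp add: power2_diff exp_kernel_power2 flip: exp_kernel_mult)
  then have "L2_dist_sq (exp_kernel d) (exp_kernel c)
      = (\<integral>u. exp_kernel (2 * d) u - 2 * exp_kernel (c + d) u + exp_kernel (2 * c) u \<partial>lborel)"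
    by (simp only: L2_dist_sq_def)
  also have "\<dots> = (\<integral>u. exp_kernel (2 * d) u \<partial>lborel) - 2 * (\<integral>u. exp_kernel (c + d) u \<partial>lborel)
      + (\<integral>u. exp_kernel (2 * c) u \<partial>lborel)"
    using assms by (simp add: integrable_exp_kernel)
  also have "\<dots> = 1 / (2 * d) - 2 / (c + d) + 1 / (2 * c)"
    using assms by (simp add: integral_exp_kernel)
  finally show ?thesis .
qed

lemma sq_int_dominated:
  assumes "f \<in> borel_measurable borel" "\<And>u. \<bar>f u\<bar> \<le> w u" "integrable lborel (\<lambda>u. (w u)\<^sup>2)"
  shows "sq_int f"
  unfolding sq_int_def
proof
  show "f \<in> borel_measurable lborel" using assms(1) by simp
  have "\<bar>f u\<bar>\<^sup>2 \<le> (w u)\<^sup>2" for u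
    using assms(2)[of u] by (intro power_mono) auto
  then show "integrable lborel (\<lambda>u. (f u)\<^sup>2)"
    by (intro Bochner_Integration.integrable_bound[OF assms(3)]) (use assms(1) in auto)
qed

lemma sq_int_exp_kernel:
  assumes "c > 0"
  shows "sq_int (exp_kernel c)"
proof (rule sq_int_dominated)
  show "exp_kernel c \<in> borel_measurable borel"
    by simp
  show "\<bar>exp_kernel c u\<bar> \<le> exp_kernel c u" for u
    by (rule abs_exp_kernel_le) simp
  show "integrable lborel (\<lambda>u. (exp_kernel c u)\<^sup>2)"
    using integrable_exp_kernel assms by (simp add: exp_kernel_power2)
qed

lemma L2_dist_sq_tendsto_0_dominated:
  fixes h :: "nat \<Rightarrow> real \<Rightarrow> real"
  assumes meas: "\<And>n. h n \<in> borel_measurable borel" "h0 \<in> borel_measurable borel"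
    and lim: "\<And>u. (\<lambda>n. h n u) \<longlonglongrightarrow> h0 u"
    and dom: "\<And>n u. \<bar>h n u\<bar> \<le> w u" "\<And>u. \<bar>h0 u\<bar> \<le> w u"
    and w: "integrable lborel (\<lambda>u. (w u)\<^sup>2)"
  shows "(\<lambda>n. L2_dist_sq (h n) h0) \<longlonglongrightarrow> 0"
proof -
  have "(\<lambda>n. \<integral>u. (h n u - h0 u)\<^sup>2 \<partial>lborel) \<longlonglongrightarrow> (\<integral>u. 0 \<partial>(lborel :: real measure))"
  proof (rule integral_dominated_convergence[where w = "\<lambda>u. 4 * (w u)\<^sup>2"])
    have "(\<lambda>n. (h n u - h0 u)\<^sup>2) \<longlonglongrightarrow> (h0 u - h0 u)\<^sup>2" for u
      using lim[of u] by (intro tendsto_intros)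
    then show "AE u in lborel. (\<lambda>n. (h n u - h0 u)\<^sup>2) \<longlonglongrightarrow> 0"
      by simp
    have "\<bar>h n u - h0 u\<bar>\<^sup>2 \<le> (2 * w u)\<^sup>2" for n u
      using dom(1)[of n u] dom(2)[of u] by (intro power_mono) auto
    then show "AE u in lborel. norm ((h n u - h0 u)\<^sup>2) \<le> 4 * (w u)\<^sup>2" for n
      by (simp add: power_mult_distrib)
    show "(\<lambda>u. (h n u - h0 u)\<^sup>2) \<in> borel_measurable lborel" for n
      using meas by measurable
    show "integrable lborel (\<lambda>u. 4 * (w u)\<^sup>2)"
      using w by simp
  qed simp
  then show ?thesis
    by (simp add: L2_dist_sq_def)
qed

lemma L2_dist_sq_exp_kernel_tendsto_0:
  assumes "continuous_on UNIV a" "\<And>s. a s > 0"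
  shows "((\<lambda>s. L2_dist_sq (exp_kernel (a s)) (exp_kernel (a t))) \<longlongrightarrow> 0) (at t)"
proof -
  have "(a \<longlongrightarrow> a t) (at t)"
    using assms(1) by (simp add: continuous_on_def)
  then have "((\<lambda>s. 1 / (2 * a s) - 2 / (a t + a s) + 1 / (2 * a t)) \<longlongrightarrow>
      1 / (2 * a t) - 2 / (a t + a t) + 1 / (2 * a t)) (at t)"
    using assms(2)[of t] by (intro tendsto_intros) auto
  then show ?thesis
    using assms(2) by (simp add: L2_dist_sq_exp_kernel)
qed

lemma continuous_on_integral_lower_limit:
  fixes f :: "real \<Rightarrow> real"
  assumes "continuous_on UNIV f"
  shows "continuous_on {..b} (\<lambda>x. integral {x..b} f)"
  unfolding continuous_on_eq_continuous_within
proof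
  fix x assume "x \<in> {..b}"
  have "continuous_on {x - 1..b} (\<lambda>x. integral {x..b} f)"
    by (intro indefinite_integral_continuous_1' integrable_continuous_interval
        continuous_on_subset[OF assms]) auto
  moreover have "at x within {..b} = at x within {x - 1..b}"
    by (rule at_within_nhd[of _ "{x - 1<..}"]) auto
  ultimately show "continuous (at x within {..b}) (\<lambda>x. integral {x..b} f)"
    using \<open>x \<in> {..b}\<close> by (simp add: continuous_on_eq_continuous_within)
qed

definition decay_kernel :: "(real \<Rightarrow> real) \<Rightarrow> real \<Rightarrow> real" where
  "decay_kernel r v = (if v \<ge> 0 then exp (- integral {-v..0} r) else 0)"

lemma borel_measurable_decay_kernel:
  assumes "continuous_on UNIV r"
  shows "decay_kernel r \<in> borel_measurable borel"
proof -
  have "continuous_on {0..} (\<lambda>v. exp (- integral {-v..0} r))"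
    by (intro continuous_intros continuous_on_compose2[OF continuous_on_integral_lower_limit[OF assms]])
       auto
  then have "(\<lambda>v. if v \<in> {0..} then exp (- integral {-v..0} r) else 0) \<in> borel_measurable borel"
    by (intro borel_measurable_continuous_on_if continuous_on_const) auto
  then show ?thesis
    by (simp add: decay_kernel_def[abs_def])
qed

lemma abs_decay_kernel_le_exp_kernel:
  assumes "continuous_on UNIV r" "\<And>s. s \<le> 0 \<Longrightarrow> e \<le> r s"
  shows "\<bar>decay_kernel r v\<bar> \<le> exp_kernel e v"
proof (cases "v \<ge> 0")
  case True
  have "integral {-v..0} (\<lambda>s. e) \<le> integral {-v..0} r"
    using assms by (intro integral_le integrable_continuous_interval continuous_on_subset[OF assms(1)])
      auto
  then show ?thesis
    using True by (simp add: decay_kernel_def exp_kernel_def mult.commute)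
qed (simp add: decay_kernel_def exp_kernel_def)

lemma sq_int_decay_kernel:
  assumes "continuous_on UNIV r" "e > 0" "\<And>s. s \<le> 0 \<Longrightarrow> e \<le> r s"
  shows "sq_int (decay_kernel r)"
proof (rule sq_int_dominated)
  show "decay_kernel r \<in> borel_measurable borel"
    using assms(1) by (rule borel_measurable_decay_kernel)
  show "\<bar>decay_kernel r v\<bar> \<le> exp_kernel e v" for v
    using assms(1,3) by (rule abs_decay_kernel_le_exp_kernel)
  show "integrable lborel (\<lambda>v. (exp_kernel e v)\<^sup>2)"
    using assms(2) by (simp add: exp_kernel_power2 integrable_exp_kernel)
qed

lemma decay_kernel_shift:
  "decay_kernel (\<lambda>s. f (s + x)) (x - u) = (if u \<le> x then exp (- integral {u..x} f) else 0)"
  using integral_shift_real_ivl[of u x x f] by (simp add: decay_kernel_def)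

lemma continuous_on_rescaled_rate:
  assumes "continuous_on UNIV a"
  shows "continuous_on UNIV (\<lambda>s. a (s / real N + t))"
proof -
  have "continuous_on UNIV (\<lambda>s. s * inverse (real N) + t)"
    by (intro continuous_intros)
  then show ?thesis
    using continuous_on_compose2[OF assms] by (simp add: divide_inverse)
qed

lemma integral_rescaled_rate_tendsto:
  fixes a :: "real \<Rightarrow> real"
  assumes "continuous_on UNIV a" "v \<ge> 0"
  shows "(\<lambda>N. integral {-v..0} (\<lambda>s. a (s / real N + t))) \<longlonglongrightarrow> v * a t"
proof -
  have "bounded (a ` {t - v..t})"
    by (intro compact_imp_bounded compact_continuous_image continuous_on_subset[OF assms(1)]) auto
  then obtain B where B: "\<And>x. x \<in> {t - v..t} \<Longrightarrow> \<bar>a x\<bar> \<le> B"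
    unfolding bounded_iff by (metis image_eqI real_norm_def)
  have "(\<lambda>N. integral {-v..0} (\<lambda>s. a (s / real N + t))) \<longlonglongrightarrow> integral {-v..0} (\<lambda>s. a t)"
  proof (rule dominated_convergence(2)[where h = "\<lambda>s. B"])
    show "(\<lambda>s. a (s / real N + t)) integrable_on {-v..0}" for N
      by (intro integrable_continuous_interval continuous_on_subset[OF continuous_on_rescaled_rate]
          assms(1)) auto
    show "norm (a (s / real N + t)) \<le> B" if "s \<in> {-v..0}" for N s
      unfolding real_norm_def
    proof (rule B)
      have "s \<le> s / real N" "s / real N \<le> 0" if "N > 0"
        using \<open>s \<in> {-v..0}\<close> that mult_left_mono_neg[of 1 "real N" s]
        by (auto simp: le_divide_eq divide_nonpos_pos)
      \<comment> \<open>for \<open>N = 0\<close> the junk value \<open>s / 0 = 0\<close> keeps the argument at \<open>t\<close>\<close>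
      then have "s / real N \<in> {-v..0}"
        using that assms(2) by (cases "N = 0") auto
      then show "s / real N + t \<in> {t - v..t}" by auto
    qed
    have "isCont a t"
      using assms(1) by (simp add: continuous_on_eq_continuous_at)
    moreover have "(\<lambda>N. s / real N + t) \<longlonglongrightarrow> t" for s
      using tendsto_add[OF lim_const_over_n[of s] tendsto_const[of t]] by simp
    ultimately show "(\<lambda>N. a (s / real N + t)) \<longlonglongrightarrow> a t" for s
      by (rule isCont_tendsto_compose)
  qed (rule integrable_const_ivl)
  moreover have "integral {-v..0} (\<lambda>s. a t) = v * a t"
    using assms(2) by simp
  ultimately show ?thesis
    by (simp only:)
qed

lemma decay_kernel_rescaled_tendsto:
  assumes "continuous_on UNIV a"
  shows "(\<lambda>N. decay_kernel (\<lambda>s. a (s / real N + t)) v) \<longlonglongrightarrow> exp_kernel (a t) v"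
proof (cases "v \<ge> 0")
  case True
  have "(\<lambda>N. exp (- integral {-v..0} (\<lambda>s. a (s / real N + t)))) \<longlonglongrightarrow> exp (- (v * a t))"
    by (intro tendsto_intros integral_rescaled_rate_tendsto[OF assms True])
  then show ?thesis
    using True by (simp add: decay_kernel_def exp_kernel_def mult.commute)
qed (simp add: decay_kernel_def exp_kernel_def)

lemma rescaled_rate_lower_bound:
  assumes "\<And>s. s \<le> t \<Longrightarrow> e \<le> a s" "s \<le> 0"
  shows "e \<le> a (s / real N + t)"
  using assms by (simp add: divide_nonpos_nonneg)

lemma L2_dist_sq_decay_kernel_rescaled_tendsto_0:
  assumes "continuous_on UNIV a" "e > 0" "\<And>s. s \<le> t \<Longrightarrow> e \<le> a s"
  shows "(\<lambda>N. L2_dist_sq (decay_kernel (\<lambda>s. a (s / real N + t))) (exp_kernel (a t))) \<longlonglongrightarrow> 0"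
proof (rule L2_dist_sq_tendsto_0_dominated[where w = "exp_kernel e"])
  show "decay_kernel (\<lambda>s. a (s / real N + t)) \<in> borel_measurable borel" for N
    by (intro borel_measurable_decay_kernel continuous_on_rescaled_rate assms(1))
  show "(\<lambda>N. decay_kernel (\<lambda>s. a (s / real N + t)) v) \<longlonglongrightarrow> exp_kernel (a t) v" for v
    using assms(1) by (rule decay_kernel_rescaled_tendsto)
  show "\<bar>decay_kernel (\<lambda>s. a (s / real N + t)) v\<bar> \<le> exp_kernel e v" for N v
    by (intro abs_decay_kernel_le_exp_kernel continuous_on_rescaled_rate assms(1)
        rescaled_rate_lower_bound[OF assms(3)])
  show "\<bar>exp_kernel (a t) v\<bar> \<le> exp_kernel e v" for v
    by (rule abs_exp_kernel_le[OF assms(3)]) simp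
  show "integrable lborel (\<lambda>v. (exp_kernel e v)\<^sup>2)"
    using assms(2) by (simp add: exp_kernel_power2 integrable_exp_kernel)
qed simp

lemma locally_stationary_exp_decay:
  fixes a :: "real \<Rightarrow> real"
  assumes cont: "continuous_on UNIV a" and lower: "\<And>t. \<exists>e>0. \<forall>s\<le>t. e \<le> a s"
  shows "locally_stationary
     (\<lambda>N t u. if u \<le> real N * t then exp (- integral {u..real N * t} (\<lambda>s. a (s / real N))) else 0)
     (\<lambda>N x. decay_kernel (\<lambda>s. a (s / real N + x / real N)))
     (\<lambda>t. exp_kernel (a t))
     (\<lambda>t. transfer (exp_kernel (a t)))"
  unfolding locally_stationary_def
proof (intro conjI allI impI)
  fix N :: nat and t u :: real
  show "(if u \<le> real N * t then exp (- integral {u..real N * t} (\<lambda>s. a (s / real N))) else 0)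
      = decay_kernel (\<lambda>s. a (s / real N + real N * t / real N)) (real N * t - u)"
    using decay_kernel_shift[of "\<lambda>s. a (s / real N)" "real N * t" u] by (simp add: add_divide_distrib)
next
  fix N :: nat and t :: real
  assume "N \<ge> 1"
  then have rate: "(\<lambda>s. a (s / real N + real N * t / real N)) = (\<lambda>s. a (s / real N + t))"
    by simp
  obtain e where e: "e > 0" "\<And>s. s \<le> t \<Longrightarrow> e \<le> a s"
    using lower by blast
  show "sq_int (decay_kernel (\<lambda>s. a (s / real N + real N * t / real N)))"
    unfolding rate using continuous_on_rescaled_rate[OF cont] e(1) rescaled_rate_lower_bound[OF e(2)]
    by (rule sq_int_decay_kernel)
next
  have pos: "a t > 0" for t
    using lower[of t] by force
  show "sq_int (exp_kernel (a t))" for t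
    using pos by (rule sq_int_exp_kernel)
  show "((\<lambda>s. L2_dist_sq (exp_kernel (a s)) (exp_kernel (a t))) \<longlongrightarrow> 0) (at t)" for t
    using cont pos by (rule L2_dist_sq_exp_kernel_tendsto_0)
next
  fix t :: real
  obtain e where "e > 0" "\<And>s. s \<le> t \<Longrightarrow> e \<le> a s"
    using lower by blast
  then have "(\<lambda>N. L2_dist_sq (decay_kernel (\<lambda>s. a (s / real N + t))) (exp_kernel (a t))) \<longlonglongrightarrow> 0"
    by (intro L2_dist_sq_decay_kernel_rescaled_tendsto_0 cont)
  moreover have "\<forall>\<^sub>F N in sequentially.
      L2_dist_sq (decay_kernel (\<lambda>s. a (s / real N + t))) (exp_kernel (a t))
      = L2_dist_sq (decay_kernel (\<lambda>s. a (s / real N + real N * t / real N))) (exp_kernel (a t))"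
    using eventually_ge_at_top[of 1] by eventually_elim simp
  ultimately show "(\<lambda>N. L2_dist_sq (decay_kernel (\<lambda>s. a (s / real N + real N * t / real N))) (exp_kernel (a t)))
      \<longlonglongrightarrow> 0"
    by (rule Lim_transform_eventually)
qed simp

theorem proposition4:
  fixes a :: "real \<Rightarrow> real"
  assumes C1: "continuous_on UNIV a"
    and C2: "\<forall>T>0. \<exists>\<epsilon>>0. \<forall>s\<le>T. a s \<ge> \<epsilon>"
  shows "locally_stationary
     (\<lambda>N t u. if u \<le> real N * t
               then exp (- integral {u..real N * t} (\<lambda>s. a (s / real N))) else 0)
     (\<lambda>N x v. if v \<ge> 0
               then exp (- integral {-v..0} (\<lambda>s. a (s / real N + x / real N))) else 0)
     (\<lambda>t u. if u \<ge> 0 then exp (- a t * u) else 0)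
     (\<lambda>t \<mu>. \<integral>u. exp (- \<i> * complex_of_real \<mu> * complex_of_real u) *
              complex_of_real (if u \<ge> 0 then exp (- a t * u) else 0) \<partial>lborel)"
proof -
  have lower: "\<exists>e>0. \<forall>s\<le>t. e \<le> a s" for t
  proof -
    have "max 1 t > 0"
      by simp
    then obtain e where "e > 0" "\<forall>s\<le>max 1 t. e \<le> a s"
      using C2 by blast
    then show ?thesis
      by (auto simp: le_max_iff_disj)
  qed
  show ?thesis
    using locally_stationary_exp_decay[OF C1 lower]
    unfolding decay_kernel_def exp_kernel_def transfer_def .
qed

end
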